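(* Let $k\ge2$ and $\ell\ge1$. The length of the longest strictly decreasing subsequence of the permutation $Z_k(\ell)$ is $(k+1)k^{\ell/2-1}-1$ if $\ell$ is even, and $2k^{(\ell-1)/2}-1$ if $\ell$ is odd.
   Context: $Z_k(\ell)$ is the permutation of $\{1,\dots,k^\ell\}$ whose $p$-th entry (for $p=1,\dots,k^\ell$) is $1+\mathrm{rev}_{k,\ell}(p-1)$, where $\mathrm{rev}_{k,\ell}(x)$ is the integer whose $\ell$-digit (zero-padded) base-$k$ representation is the reversal of that of $x$. Equivalently, $Z_k(\ell)$ is the stable configuration (read left to right on layer $\ell+1$) of labeled chip-firing on the infinite rooted directed $k$-ary tree starting from chips $1,\dots,k^\ell$ at the root, under the strategy where each vertex holding chips $c_1<\cdots<c_{kq}$ fires the consecutive $k$-tuples $(c_1,\dots,c_k),(c_{k+1},\dots,c_{2k}),\dots$; in a firing the $i$-th smallest chip of the fired $k$-tuple goes to the $i$-th leftmost child. *)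

theory Defs
  imports Main "HOL-Library.Sublist"
begin

text \<open>Digit reversal: the integer whose l-digit (zero-padded) base-k representation
  is the reversal of that of x (digit i of x is (x div k^i) mod k).\<close>
definition rev_digits :: "nat \<Rightarrow> nat \<Rightarrow> nat \<Rightarrow> nat" where
  "rev_digits k l x = (\<Sum>i<l. ((x div k ^ i) mod k) * k ^ (l - 1 - i))"

definition Zperm :: "nat \<Rightarrow> nat \<Rightarrow> nat list" where
  "Zperm k l = map (\<lambda>p. 1 + rev_digits k l (p - 1)) [1..<k ^ l + 1]"

definition lds :: "nat list \<Rightarrow> nat" where
  "lds xs = Max {length ys | ys. subseq ys xs \<and> sorted_wrt (>) ys}"

end

theory Submission
  imports Defs
begin

text \<open>Index positions from 0 and write \<open>l = N + 1 + P\<close>. A position \<open>p\<close> splits into its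
  high \<open>P\<close> digits \<open>A\<close>, a middle digit \<open>c\<close> and its low \<open>N\<close> digits \<open>s\<close>; the entry at \<open>p\<close>
  then reads \<open>rev s\<close>, \<open>c\<close>, \<open>rev A\<close> from the top. Along a decreasing subsequence \<open>A\<close> weakly
  increases and \<open>rev s\<close> weakly decreases, and they cannot both stay put: then only \<open>c\<close> changes,
  and position and value move in the same direction. So \<open>A - rev s\<close> strictly increases,
  which bounds the length by \<open>k^P + k^N - 1\<close>. For \<open>P - N \<in> {0, 1}\<close> a staircase through
  the \<open>(A, rev s)\<close> grid attains the bound, and \<open>P = l div 2\<close> gives the formula.\<close>

lemma rev_digits_0 [simp]: "rev_digits k 0 x = 0"
  by (simp add: rev_digits_def)

lemma rev_digits_Suc: "rev_digits k (Suc n) x = (x mod k) * k ^ n + rev_digits k n (x div k)"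
  unfolding rev_digits_def
  by (simp add: sum.lessThan_Suc_shift div_mult2_eq del: sum.lessThan_Suc)

lemma rev_digits_Suc_0 [simp]: "rev_digits k (Suc 0) x = x mod k"
  using rev_digits_Suc[of k 0 x] by simp

lemma mult_add_less_mult:
  assumes "(a::nat) < k" "r < q"
  shows "a * q + r < k * q"
proof -
  have "a * q + r < Suc a * q"
    using assms(2) by simp
  also have "\<dots> \<le> k * q"
    using assms(1) by (intro mult_right_mono) simp_all
  finally show ?thesis .
qed

lemma mult_add_less_mult_add: "(a::nat) < b \<Longrightarrow> r < q \<Longrightarrow> a * q + r < b * q + s"
  using mult_add_less_mult[of a b r q] by linarith

lemma rev_digits_less: "0 < k \<Longrightarrow> rev_digits k n x < k ^ n"
proof (induction n arbitrary: x)
  case (Suc n)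
  then show ?case
    using mult_add_less_mult[of "x mod k" k] by (simp add: rev_digits_Suc)
qed simp

lemma rev_digits_add_mult_power:
  assumes "0 < k" "r < k ^ m"
  shows "rev_digits k (m + n) (a * k ^ m + r) = rev_digits k m r * k ^ n + rev_digits k n a"
  using assms(2)
proof (induction m arbitrary: r)
  case (Suc m)
  have split: "a * k ^ Suc m + r = r + (a * k ^ m) * k"
    by (simp add: algebra_simps)
  have "r div k < k ^ m"
    using Suc.prems assms(1) by (simp add: div_less_iff_less_mult mult.commute)
  then have IH: "rev_digits k (m + n) (a * k ^ m + r div k)
      = rev_digits k m (r div k) * k ^ n + rev_digits k n a"
    by (rule Suc.IH)
  have "rev_digits k (Suc m + n) (a * k ^ Suc m + r)
      = (r mod k) * k ^ (m + n) + rev_digits k (m + n) (a * k ^ m + r div k)"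
    unfolding split using assms(1) by (simp add: rev_digits_Suc)
  also have "\<dots> = rev_digits k (Suc m) r * k ^ n + rev_digits k n a"
    unfolding IH by (simp add: rev_digits_Suc algebra_simps power_add)
  finally show ?case .
qed simp

lemma rev_digits_rev_digits:
  assumes "0 < k" "x < k ^ n"
  shows "rev_digits k n (rev_digits k n x) = x"
  using assms(2)
proof (induction n arbitrary: x)
  case (Suc n)
  have "x div k < k ^ n"
    using Suc.prems assms(1) by (simp add: div_less_iff_less_mult mult.commute)
  moreover have "rev_digits k (n + 1) ((x mod k) * k ^ n + rev_digits k n (x div k))
      = rev_digits k n (rev_digits k n (x div k)) * k + x mod k"
    using rev_digits_add_mult_power[OF assms(1) rev_digits_less[OF assms(1)], of n 1]
    by simp
  ultimately show ?case
    using Suc.IH by (simp add: rev_digits_Suc)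
qed simp

lemma rev_digits_three_blocks:
  assumes "0 < k" "c < k" "s < k ^ N"
  shows "rev_digits k (N + 1 + P) (A * k ^ (N + 1) + (c * k ^ N + s))
    = rev_digits k N s * k ^ (P + 1) + (c * k ^ P + rev_digits k P A)"
proof -
  have "c * k ^ N + s < k ^ (N + 1)"
    using mult_add_less_mult[OF assms(2,3)] by simp
  then have "rev_digits k (N + 1 + P) (A * k ^ (N + 1) + (c * k ^ N + s))
      = rev_digits k (N + 1) (c * k ^ N + s) * k ^ P + rev_digits k P A"
    by (rule rev_digits_add_mult_power[OF assms(1)])
  also have "rev_digits k (N + 1) (c * k ^ N + s) = rev_digits k N s * k + c"
    using rev_digits_add_mult_power[OF assms(1,3), of 1 c] assms(2) by simp
  finally show ?thesis
    by (simp add: algebra_simps)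
qed

lemma place_value_three_blocks:
  "(p::nat) = p div k ^ (N + 1) * k ^ (N + 1) + (p div k ^ N mod k * k ^ N + p mod k ^ N)"
  using div_mult_mod_eq[of p "k ^ (N + 1)"] mod_mult2_eq[of p "k ^ N" k]
  by (simp add: algebra_simps)

lemma rev_digits_place_value:
  assumes "0 < k"
  shows "rev_digits k (N + 1 + P) p
    = rev_digits k N (p mod k ^ N) * k ^ (P + 1) + (p div k ^ N mod k * k ^ P + rev_digits k P (p div k ^ (N + 1)))"
proof -
  have "rev_digits k (N + 1 + P) p = rev_digits k (N + 1 + P)
      (p div k ^ (N + 1) * k ^ (N + 1) + (p div k ^ N mod k * k ^ N + p mod k ^ N))"
    using place_value_three_blocks[of p k N] by (rule arg_cong)
  also have "\<dots> = rev_digits k N (p mod k ^ N) * k ^ (P + 1)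
      + (p div k ^ N mod k * k ^ P + rev_digits k P (p div k ^ (N + 1)))"
    using assms by (intro rev_digits_three_blocks) simp_all
  finally show ?thesis .
qed

lemma rev_digits_div_power:
  assumes "0 < k"
  shows "rev_digits k (N + 1 + P) p div k ^ (P + 1) = rev_digits k N (p mod k ^ N)"
proof -
  have "p div k ^ N mod k * k ^ P + rev_digits k P (p div k ^ (N + 1)) < k ^ (P + 1)"
    using mult_add_less_mult[of "p div k ^ N mod k" k, OF _ rev_digits_less[OF assms]] assms
    by (simp add: mult.commute)
  moreover have "(a * q + w) div q = a" if "w < q" for a w q :: nat
    using that by simp
  ultimately show ?thesis
    unfolding rev_digits_place_value[OF assms] by blast
qed

lemma Zperm_eq_map_upt: "Zperm k l = map (\<lambda>p. 1 + rev_digits k l p) [0..<k ^ l]"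
  unfolding Zperm_def by (simp add: map_Suc_upt[symmetric] del: upt_Suc)

lemma sorted_wrt_less_length_le:
  assumes "sorted_wrt (<) xs" "\<forall>x\<in>set xs. x < (m::nat)"
  shows "length xs \<le> m"
proof -
  have "length xs = card (set xs)"
    using assms(1) by (simp add: strict_sorted_iff distinct_card)
  also have "\<dots> \<le> card {..<m}"
    using assms(2) by (intro card_mono) auto
  finally show ?thesis
    by simp
qed

lemma decreasing_subseq_of_chain:
  fixes f :: "nat \<Rightarrow> nat" and g :: "nat \<Rightarrow> 'a::linorder"
  assumes step: "\<And>t. Suc t < T \<Longrightarrow> f t < f (Suc t) \<and> g (f (Suc t)) < g (f t)"
    and bound: "\<And>t. t < T \<Longrightarrow> f t < n"
  shows "subseq (map (g \<circ> f) [0..<T]) (map g [0..<n]) \<and> sorted_wrt (>) (map (g \<circ> f) [0..<T])"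
proof
  have "sorted_wrt (<) (map f [0..<T])"
    using step by (simp add: sorted_wrt_iff_nth_Suc_transp transp_on_less)
  then have "subseq (map f [0..<T]) [0..<n]"
    using bound by (intro sorted_subset_imp_subseq) auto
  then show "subseq (map (g \<circ> f) [0..<T]) (map g [0..<n])"
    by (metis list.map_comp subseq_map)
  show "sorted_wrt (>) (map (g \<circ> f) [0..<T])"
    using step by (simp add: sorted_wrt_iff_nth_Suc_transp transp_on_greater)
qed

lemma lds_eqI:
  assumes "\<And>ys. subseq ys xs \<Longrightarrow> sorted_wrt (>) ys \<Longrightarrow> length ys \<le> n"
    and "subseq ys xs" "sorted_wrt (>) ys" "length ys = n"
  shows "lds xs = n"
proof -
  let ?S = "{length ys |ys. subseq ys xs \<and> sorted_wrt (>) ys}"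
  have "?S \<subseteq> {..n}"
    using assms(1) by blast
  then have "finite ?S"
    by (rule finite_subset) simp
  moreover have "n \<in> ?S"
    using assms(2-4) by blast
  ultimately show ?thesis
    unfolding lds_def using \<open>?S \<subseteq> {..n}\<close> by (intro Max_eqI) auto
qed

lemma decreasing_pair_key_less:
  assumes k: "0 < k" and "p < p'"
    and "rev_digits k (N + 1 + P) p' < rev_digits k (N + 1 + P) p"
  shows "p div k ^ (N + 1) + rev_digits k N (p' mod k ^ N)
    < p' div k ^ (N + 1) + rev_digits k N (p mod k ^ N)"
proof -
  have "p div k ^ (N + 1) \<le> p' div k ^ (N + 1)"
    using \<open>p < p'\<close> by (simp add: div_le_mono)
  moreover have "rev_digits k N (p' mod k ^ N) \<le> rev_digits k N (p mod k ^ N)"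
    using div_le_mono[OF less_imp_le[OF assms(3)], of "k ^ (P + 1)"]
    by (simp only: rev_digits_div_power[OF k])
  moreover have "\<not> (p div k ^ (N + 1) = p' div k ^ (N + 1)
      \<and> rev_digits k N (p' mod k ^ N) = rev_digits k N (p mod k ^ N))"
  proof
    assume eq: "p div k ^ (N + 1) = p' div k ^ (N + 1)
      \<and> rev_digits k N (p' mod k ^ N) = rev_digits k N (p mod k ^ N)"
    then have low: "p' mod k ^ N = p mod k ^ N"
      using rev_digits_rev_digits[OF k, of "_ mod k ^ N" N] k by (metis mod_less_divisor zero_less_power)
    have "p' div k ^ N mod k * k ^ P < p div k ^ N mod k * k ^ P"
      using assms(3) eq unfolding rev_digits_place_value[OF k] by simp
    then have "p' div k ^ N mod k * k ^ N \<le> p div k ^ N mod k * k ^ N"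
      by (simp add: mult_le_cancel2)
    moreover have "p' = p div k ^ (N + 1) * k ^ (N + 1) + (p' div k ^ N mod k * k ^ N + p mod k ^ N)"
      using place_value_three_blocks[of p' k N] eq low by simp
    ultimately have "p' \<le> p"
      using place_value_three_blocks[of p k N] by linarith
    then show False
      using \<open>p < p'\<close> by simp
  qed
  ultimately show ?thesis
    by linarith
qed

lemma length_decreasing_subseq_Zperm_le:
  assumes k: "0 < k" and "subseq ys (Zperm k (N + 1 + P))" and "sorted_wrt (>) ys"
  shows "length ys \<le> k ^ P + k ^ N - 1"
proof -
  define g where "g = (\<lambda>p. 1 + rev_digits k (N + 1 + P) p)"
  obtain I where ys: "ys = map g (nths [0..<k ^ (N + 1 + P)] I)"
    using assms(2) unfolding Zperm_eq_map_upt subseq_conv_nths nths_map g_def by blast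
  define zs where "zs = nths [0..<k ^ (N + 1 + P)] I"
  \<comment> \<open>the potential \<open>A - rev s\<close>, shifted by \<open>k^N - 1\<close> to stay in \<open>nat\<close>\<close>
  define key where "key p = p div k ^ (N + 1) + (k ^ N - 1 - rev_digits k N (p mod k ^ N))" for p
  have "sorted_wrt (<) zs"
    by (simp add: zs_def strict_sorted_iff sorted_nths)
  with assms(3) have "sorted_wrt (\<lambda>p p'. p < p' \<and> g p' < g p) zs"
    unfolding ys zs_def[symmetric] sorted_wrt_map sorted_wrt_iff_nth_less by simp
  then have "sorted_wrt (<) (map key zs)"
    unfolding sorted_wrt_map
  proof (rule sorted_wrt_mono_rel[rotated])
    fix p p' assume "p < p' \<and> g p' < g p"
    then have "p div k ^ (N + 1) + rev_digits k N (p' mod k ^ N)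
        < p' div k ^ (N + 1) + rev_digits k N (p mod k ^ N)"
      unfolding g_def by (intro decreasing_pair_key_less[OF k]) auto
    moreover have "rev_digits k N (p mod k ^ N) < k ^ N" "rev_digits k N (p' mod k ^ N) < k ^ N"
      using rev_digits_less[OF k] by auto
    ultimately show "key p < key p'"
      unfolding key_def by linarith
  qed
  moreover have "key p < k ^ P + k ^ N - 1" if "p \<in> set zs" for p
  proof -
    have "p < k ^ P * k ^ (N + 1)"
      using that set_nths_subset[of "[0..<k ^ (N + 1 + P)]" I]
      by (auto simp: zs_def power_add mult_ac)
    then have "p div k ^ (N + 1) < k ^ P"
      by (simp add: div_less_iff_less_mult k)
    moreover have "0 < k ^ N"
      using k by simp
    ultimately show ?thesis
      unfolding key_def by linarith
  qed
  ultimately have "length (map key zs) \<le> k ^ P + k ^ N - 1"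
    by (intro sorted_wrt_less_length_le) auto
  then show ?thesis
    by (simp add: ys zs_def)
qed

lemma rev_digits_Suc_less:
  assumes "2 \<le> k" "A mod k = k - 1"
  shows "rev_digits k (Suc n) (Suc A) < rev_digits k (Suc n) A"
proof -
  have "Suc A mod k = 0"
    using assms by (simp add: mod_Suc)
  then have "rev_digits k (Suc n) (Suc A) < k ^ n"
    using rev_digits_less[of k n] assms(1) by (simp add: rev_digits_Suc)
  also have "\<dots> \<le> (k - 1) * k ^ n"
    using assms(1) by simp
  also have "\<dots> \<le> rev_digits k (Suc n) A"
    using assms(2) by (simp add: rev_digits_Suc)
  finally show ?thesis .
qed

text \<open>Inside a block the high
  digits advance while the middle digit drops; the next block lowers the leading block of the value.\<close>
definition staircase :: "nat \<Rightarrow> nat \<Rightarrow> nat \<Rightarrow> nat \<Rightarrow> nat \<Rightarrow> nat" where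
  "staircase k N K j e = (j * K + e) * k ^ (N + 1)
     + ((if e = K then 0 else k - 1 - e) * k ^ N + rev_digits k N (k ^ N - 1 - j))"

lemma staircase_less:
  assumes "0 < k" "j * K + e < k ^ P"
  shows "staircase k N K j e < k ^ (N + 1 + P)"
proof -
  have "(if e = K then 0 else k - 1 - e) * k ^ N + rev_digits k N (k ^ N - 1 - j) < k * k ^ N"
    using assms(1) by (intro mult_add_less_mult rev_digits_less) auto
  then have "staircase k N K j e < Suc (j * K + e) * k ^ (N + 1)"
    unfolding staircase_def by simp
  also have "\<dots> \<le> k ^ P * k ^ (N + 1)"
    using assms(2) by (intro mult_right_mono) auto
  finally show ?thesis
    by (simp add: power_add mult_ac)
qed

lemma rev_digits_staircase:
  assumes "0 < k"
  shows "rev_digits k (N + 1 + P) (staircase k N K j e)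
    = (k ^ N - 1 - j) * k ^ (P + 1) + ((if e = K then 0 else k - 1 - e) * k ^ P + rev_digits k P (j * K + e))"
  using rev_digits_three_blocks[OF assms(1), of "if e = K then 0 else k - 1 - e" "rev_digits k N (k ^ N - 1 - j)" N P]
    rev_digits_rev_digits[OF assms(1), of "k ^ N - 1 - j" N] rev_digits_less[OF assms(1), of N] assms(1)
  unfolding staircase_def by auto

lemma staircase_step_within_block:
  assumes k: "2 \<le> k" and K: "K = 1 \<or> (K = k \<and> P = Suc N)" and "e < K"
  shows "staircase k N K j e < staircase k N K j (Suc e)
    \<and> rev_digits k (N + 1 + P) (staircase k N K j (Suc e))
      < rev_digits k (N + 1 + P) (staircase k N K j e)"
proof -
  have k0: "0 < k"
    using k by simp
  define c where "c e = (if e = K then 0 else k - 1 - e)" for e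
  have "c e * k ^ N + rev_digits k N (k ^ N - 1 - j) < k * k ^ N"
    using k by (intro mult_add_less_mult rev_digits_less) (auto simp: c_def)
  then have "staircase k N K j e < staircase k N K j (Suc e)"
    unfolding staircase_def c_def[symmetric] by (simp add: algebra_simps)
  moreover have "c (Suc e) * k ^ P + rev_digits k P (j * K + Suc e) < c e * k ^ P + rev_digits k P (j * K + e)"
  proof (cases "c e = 0")
    case False
    then have "c (Suc e) < c e"
      using \<open>e < K\<close> by (auto simp: c_def)
    then show ?thesis
      using k by (intro mult_add_less_mult_add rev_digits_less) auto
  next
    case True
    \<comment> \<open>only at the end of a block of length \<open>k\<close>, where the high digits carry\<close>
    then have "K = k" "e = k - 1" "P = Suc N"
      using K k \<open>e < K\<close> by (auto simp: c_def)
    then have "(j * K + e) mod k = ((k - 1) + j * k) mod k"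
      by (simp only: add.commute)
    also have "\<dots> = k - 1"
      using k by (subst mod_mult_self1) simp
    finally have "(j * K + e) mod k = k - 1" .
    moreover have "c (Suc e) = 0"
      using \<open>e < K\<close> \<open>K = k\<close> \<open>e = k - 1\<close> by (simp add: c_def)
    ultimately show ?thesis
      using rev_digits_Suc_less[OF k] True \<open>P = Suc N\<close> by simp
  qed
  then have "rev_digits k (N + 1 + P) (staircase k N K j (Suc e))
      < rev_digits k (N + 1 + P) (staircase k N K j e)"
    unfolding rev_digits_staircase[OF k0] c_def by simp
  ultimately show ?thesis ..
qed

lemma staircase_step_next_block:
  assumes k: "2 \<le> k" and "0 < K" and "Suc j < k ^ N"
  shows "staircase k N K j K < staircase k N K (Suc j) 0
    \<and> rev_digits k (N + 1 + P) (staircase k N K (Suc j) 0)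
      < rev_digits k (N + 1 + P) (staircase k N K j K)"
proof -
  have k0: "0 < k"
    using k by simp
  have "rev_digits k N (k ^ N - 1 - j) < k ^ N"
    using k0 by (rule rev_digits_less)
  also have "\<dots> \<le> (k - 1) * k ^ N"
    using k by simp
  finally have "staircase k N K j K < staircase k N K (Suc j) 0"
    unfolding staircase_def using \<open>0 < K\<close> by (simp add: algebra_simps)
  moreover have "(k ^ N - 1 - Suc j) * k ^ (P + 1) + ((k - 1) * k ^ P + rev_digits k P (Suc j * K))
      < (k ^ N - 1 - j) * k ^ (P + 1) + (0 * k ^ P + rev_digits k P (j * K + K))"
  proof (rule mult_add_less_mult_add)
    show "k ^ N - 1 - Suc j < k ^ N - 1 - j"
      using \<open>Suc j < k ^ N\<close> by simp
    show "(k - 1) * k ^ P + rev_digits k P (Suc j * K) < k ^ (P + 1)"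
      using mult_add_less_mult[of "k - 1" k "rev_digits k P (Suc j * K)" "k ^ P"] rev_digits_less[OF k0, of P] k0
      by (simp add: mult.commute)
  qed
  then have "rev_digits k (N + 1 + P) (staircase k N K (Suc j) 0)
      < rev_digits k (N + 1 + P) (staircase k N K j K)"
    unfolding rev_digits_staircase[OF k0] using \<open>0 < K\<close> by (simp add: algebra_simps)
  ultimately show ?thesis ..
qed

definition staircase_path :: "nat \<Rightarrow> nat \<Rightarrow> nat \<Rightarrow> nat \<Rightarrow> nat" where
  "staircase_path k N K t = staircase k N K (t div (K + 1)) (t mod (K + 1))"

lemma staircase_path_step:
  assumes k: "2 \<le> k" and K: "K = 1 \<or> (K = k \<and> P = Suc N)" and t: "Suc t < k ^ N * (K + 1) - 1"
  shows "staircase_path k N K t < staircase_path k N K (Suc t)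
    \<and> rev_digits k (N + 1 + P) (staircase_path k N K (Suc t))
      < rev_digits k (N + 1 + P) (staircase_path k N K t)"
proof -
  define j e where "j = t div (K + 1)" and "e = t mod (K + 1)"
  have t_eq: "t = j * (K + 1) + e" and "e \<le> K"
    using div_mult_mod_eq[of t "K + 1"] mod_less_divisor[of "K + 1" t] by (auto simp: j_def e_def)
  have div_mod: "(q * n + r) div n = q \<and> (q * n + r) mod n = r" if "r < n" for q n r :: nat
    using that by simp
  show ?thesis
  proof (cases "e = K")
    case True
    then have "Suc t = Suc j * (K + 1) + 0"
      using t_eq by simp
    then have "Suc t div (K + 1) = Suc j" "Suc t mod (K + 1) = 0"
      using div_mod[of 0 "K + 1" "Suc j"] by simp_all
    have "Suc j * (K + 1) < k ^ N * (K + 1)"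
      using t \<open>Suc t = Suc j * (K + 1) + 0\<close> by linarith
    then have "Suc j < k ^ N"
      using mult_less_cancel2 by blast
    moreover have "0 < K"
      using K k by auto
    ultimately show ?thesis
      using staircase_step_next_block[OF k, of K j N P] True
        \<open>Suc t div (K + 1) = Suc j\<close> \<open>Suc t mod (K + 1) = 0\<close>
      unfolding staircase_path_def j_def[symmetric] e_def[symmetric] by simp
  next
    case False
    then have "Suc t = j * (K + 1) + Suc e" "Suc e < K + 1"
      using t_eq \<open>e \<le> K\<close> by auto
    then have "Suc t div (K + 1) = j" "Suc t mod (K + 1) = Suc e"
      using div_mod[of "Suc e" "K + 1" j] by simp_all
    then show ?thesis
      using staircase_step_within_block[OF k K, of e j] False \<open>e \<le> K\<close>
      unfolding staircase_path_def j_def[symmetric] e_def[symmetric] by simp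
  qed
qed

lemma staircase_path_less:
  assumes k: "0 < k" and K: "0 < K" "k ^ N * K = k ^ P" and t: "t < k ^ N * (K + 1) - 1"
  shows "staircase_path k N K t < k ^ (N + 1 + P)"
proof -
  define j e where "j = t div (K + 1)" and "e = t mod (K + 1)"
  have t_eq: "t = j * (K + 1) + e" and "e \<le> K"
    using div_mult_mod_eq[of t "K + 1"] mod_less_divisor[of "K + 1" t] by (auto simp: j_def e_def)
  have "j * K + e < k ^ N * K"
  proof (cases "e = K")
    case True
    then have "Suc j * (K + 1) = Suc t"
      using t_eq by simp
    then have "Suc j * (K + 1) < k ^ N * (K + 1)"
      using t by linarith
    then have "Suc j < k ^ N"
      using mult_less_cancel2 by blast
    then have "Suc j * K < k ^ N * K"
      using K(1) by (rule mult_strict_right_mono)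
    then show ?thesis
      using True by simp
  next
    case False
    then have "j * (K + 1) < k ^ N * (K + 1)"
      using t t_eq by linarith
    then have "j < k ^ N"
      using mult_less_cancel2 by blast
    then have "Suc j * K \<le> k ^ N * K"
      by (intro mult_right_mono) simp_all
    then show ?thesis
      using False \<open>e \<le> K\<close> by simp
  qed
  then show ?thesis
    using staircase_less[OF k, of j K e P N] K(2) unfolding staircase_path_def j_def e_def by simp
qed

lemma ex_decreasing_subseq_Zperm:
  assumes k: "2 \<le> k" and "P = N \<or> P = Suc N"
  shows "\<exists>ys. subseq ys (Zperm k (N + 1 + P)) \<and> sorted_wrt (>) ys \<and> length ys = k ^ P + k ^ N - 1"
proof -
  define K where "K = (if P = N then 1 else k)"
  have K: "K = 1 \<or> (K = k \<and> P = Suc N)" "0 < K" "k ^ N * K = k ^ P"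
    using assms by (auto simp: K_def)
  \<comment> \<open>the very last cell is dropped: its high digits \<open>k^N * K = k^P\<close> overflow\<close>
  define T where "T = k ^ N * (K + 1) - 1"
  define g where "g = (\<lambda>p. 1 + rev_digits k (N + 1 + P) p)"
  define ys where "ys = map (g \<circ> staircase_path k N K) [0..<T]"
  have "subseq ys (map g [0..<k ^ (N + 1 + P)]) \<and> sorted_wrt (>) ys"
    unfolding ys_def
  proof (rule decreasing_subseq_of_chain)
    show "staircase_path k N K t < staircase_path k N K (Suc t)
        \<and> g (staircase_path k N K (Suc t)) < g (staircase_path k N K t)" if "Suc t < T" for t
      using staircase_path_step[OF k K(1)] that unfolding T_def g_def by simp
    show "staircase_path k N K t < k ^ (N + 1 + P)" if "t < T" for t
      using staircase_path_less[of k K N P t] k K that unfolding T_def by simp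
  qed
  moreover have "length ys = k ^ P + k ^ N - 1"
    using K(3) by (simp add: ys_def T_def algebra_simps)
  ultimately show ?thesis
    unfolding Zperm_eq_map_upt g_def[symmetric] by blast
qed

theorem theorem7p3:
  fixes k l :: nat
  assumes "k \<ge> 2" and "l \<ge> 1"
  shows "lds (Zperm k l) =
           (if even l then (k + 1) * k ^ (l div 2 - 1) - 1
            else 2 * k ^ ((l - 1) div 2) - 1)"
proof -
  define P N where "P = l div 2" and "N = (l - 1) div 2"
  have l: "l = N + 1 + P" and PN: "P = N \<or> P = Suc N"
    using assms(2) unfolding P_def N_def by presburger+
  obtain ys where "subseq ys (Zperm k l)" "sorted_wrt (>) ys" "length ys = k ^ P + k ^ N - 1"
    using ex_decreasing_subseq_Zperm[OF assms(1) PN] l by blast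
  then have "lds (Zperm k l) = k ^ P + k ^ N - 1"
    using length_decreasing_subseq_Zperm_le[of k _ N P] assms(1) l by (intro lds_eqI) auto
  also have "\<dots> = (if even l then (k + 1) * k ^ (l div 2 - 1) - 1 else 2 * k ^ ((l - 1) div 2) - 1)"
  proof (cases "even l")
    case True
    then have "P = Suc N" "l div 2 - 1 = N"
      using assms(2) unfolding P_def N_def by presburger+
    then show ?thesis
      using True by (simp add: algebra_simps)
  next
    case False
    then have "P = N"
      unfolding P_def N_def by presburger
    then show ?thesis
      using False by (simp add: N_def mult_2)
  qed
  finally show ?thesis .
qed
end
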